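(* Let $m\ge 1$, let $\ell_1,\dots,\ell_m$ be positive integers, let $p\in[m]$, put $n=\ell_1+\cdots+\ell_m$, and define $\ell'=(\ell'_1,\dots,\ell'_m)$ by $\ell'_i=\ell_i+1$ for $i\neq p$ and $\ell'_p=\ell_p$. Let $\alpha$ be a cyclic word (of length $n+m-1$) over $[m]$ in which each letter $i$ occurs exactly $\ell'_i$ times. Then $\alpha\in\textsf{L-NCN}(\ell')$ if and only if $\alpha=\overline{\omega}$ for some valid word $\omega\in[m]^{n+m-2}$.
   Context: A subword of a word means a not necessarily contiguous subsequence. Given $m$, $p\in[m]$ and positive integers $\ell_1,\dots,\ell_m$ with $n=\sum\ell_i$, a word $\omega\in[m]^{n+m-2}$ is called valid if: the letter $p$ occurs exactly $\ell_p-1$ times; each letter $j\in[m]\setminus\{p\}$ occurs exactly $\ell_j+1$ times; for $i\neq j$ there is no subword $ijij$; and for $i\neq p$ there is no subword $ipi$. A cyclic word is an equivalence class of words under cyclic rotation. For a valid word $\omega$, $\overline{\omega}$ denotes the cyclic word (rotation class) of the word $\omega p$ obtained by appending one letter $p$ at the end (i.e. inserting $p$ between the last and first letters cyclically). For a sequence $x=(x_1,\dots,x_t)$ of positive integers with $N=\sum x_i$, $\textsf{L-NC}(x)$ is the set of words $w=w_1\cdots w_N$ over $[t]$ in which each letter $i$ occurs exactly $x_i$ times and such that there are no indices $a<b<c<d$ and letters $i\neq j$ with $w_a=w_c=i$, $w_b=w_d=j$ (equivalently, the partition of $[N]$ into the sets $\{a: w_a=i\}$ is noncrossing, the block of size $x_i$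 being labeled $i$); these are the labeled noncrossing partitions of type $x$. This condition is invariant under cyclic rotation, and $\textsf{L-NCN}(x)$ denotes the set of rotation classes of elements of $\textsf{L-NC}(x)$ (labeled noncrossing necklaces of type $x$). *)

theory Defs
  imports "HOL-Library.Sublist"
begin

text \<open>Words over [m] are lists of natural numbers with letters in {1..m}.
  Subword = not necessarily contiguous subsequence (subseq).\<close>

definition valid_word :: "nat \<Rightarrow> nat \<Rightarrow> (nat \<Rightarrow> nat) \<Rightarrow> nat list \<Rightarrow> bool" where
  "valid_word m p l \<omega> \<longleftrightarrow>
     length \<omega> = (\<Sum>i=1..m. l i) + m - 2 \<and>
     set \<omega> \<subseteq> {1..m} \<and>
     count_list \<omega> p = l p - 1 \<and>
     (\<forall>j\<in>{1..m}. j \<noteq> p \<longrightarrow> count_list \<omega> j = l j + 1) \<and>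
     (\<forall>i j. i \<noteq> j \<longrightarrow> \<not> subseq [i, j, i, j] \<omega>) \<and>
     (\<forall>i. i \<noteq> p \<longrightarrow> \<not> subseq [i, p, i] \<omega>)"

text \<open>Cyclic word: rotation class of a word.\<close>
definition rot_class :: "'a list \<Rightarrow> 'a list set" where
  "rot_class w = {rotate k w | k. True}"

definition LNC :: "nat \<Rightarrow> (nat \<Rightarrow> nat) \<Rightarrow> nat list set" where
  "LNC t x = {w. set w \<subseteq> {1..t} \<and> length w = (\<Sum>i=1..t. x i) \<and>
      (\<forall>i\<in>{1..t}. count_list w i = x i) \<and>
      \<not> (\<exists>a b c d i j. a < b \<and> b < c \<and> c < d \<and> d < length w \<and> i \<noteq> j \<and>
            w ! a = i \<and> w ! c = i \<and> w ! b = j \<and> w ! d = j)}"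

definition LNCN :: "nat \<Rightarrow> (nat \<Rightarrow> nat) \<Rightarrow> nat list set set" where
  "LNCN t x = rot_class ` LNC t x"

end

theory Submission
  imports Defs
begin

text \<open>A word is a labeled noncrossing partition iff it avoids every pattern \<open>ijij\<close> with
  \<open>i \<noteq> j\<close>, and this is invariant under rotation, so membership in \<open>L-NCN\<close> depends only on
  the necklace. Cutting a noncrossing necklace right after an occurrence of \<open>p\<close> leaves a
  word \<open>\<omega>\<close>, and \<open>\<omega> p\<close> avoids all \<open>ijij\<close> iff \<open>\<omega>\<close> avoids all \<open>ijij\<close> and all \<open>ipi\<close> with
  \<open>i \<noteq> p\<close>: a new occurrence must end in the appended \<open>p\<close>.\<close>

definition noncrossing :: "'a list \<Rightarrow> bool" where
  "noncrossing w \<longleftrightarrow> (\<forall>i j. i \<noteq> j \<longrightarrow> \<not> subseq [i, j, i, j] w)"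

lemma noncrossingD: "noncrossing w \<Longrightarrow> subseq [i, j, i, j] w \<Longrightarrow> i = j"
  unfolding noncrossing_def by blast

lemma subseq_snoc_iff:
  "subseq (xs @ [y]) (ys @ [x]) \<longleftrightarrow> subseq (xs @ [y]) ys \<or> (y = x \<and> subseq xs ys)"
proof
  assume "subseq (xs @ [y]) (ys @ [x])"
  then obtain zs1 zs2 where split: "xs @ [y] = zs1 @ zs2" "subseq zs1 ys" "subseq zs2 [x]"
    by (rule subseq_appendE)
  from \<open>subseq zs2 [x]\<close> have "zs2 = [] \<or> zs2 = [x]"
    by (cases zs2) (auto split: if_splits)
  then show "subseq (xs @ [y]) ys \<or> (y = x \<and> subseq xs ys)"
    using split by auto
qed (auto intro: subseq_rev_drop_many)

lemmas subseq_abab_snoc_iff = subseq_snoc_iff[of "[i, j, i]" j for i j, unfolded append_Cons append_Nil]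

lemma noncrossing_rotate1: "noncrossing w \<Longrightarrow> noncrossing (rotate1 w)"
proof (cases w)
  case (Cons x xs)
  assume nc: "noncrossing w"
  show "noncrossing (rotate1 w)"
    unfolding noncrossing_def
  proof (intro allI impI notI)
    fix i j assume "i \<noteq> j" and "subseq [i, j, i, j] (rotate1 w)"
    then consider "subseq [i, j, i, j] xs" | "j = x" "subseq [i, j, i] xs"
      unfolding Cons rotate1.simps subseq_abab_snoc_iff by blast
    then have "subseq [i, j, i, j] w \<or> subseq [j, i, j, i] w"
    proof cases
      case 1
      then show ?thesis
        unfolding Cons by (intro disjI1 list_emb.list_emb_Cons)
    next
      case 2
      then have "subseq (j # [i, j, i]) (j # xs)"
        by (intro subseq_Cons2)
      then show ?thesis
        using \<open>j = x\<close> Cons by simp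
    qed
    with nc \<open>i \<noteq> j\<close> show False
      by (metis noncrossingD)
  qed
qed simp

lemma noncrossing_rotate: "noncrossing w \<Longrightarrow> noncrossing (rotate k w)"
  by (induction k) (simp_all add: noncrossing_rotate1)

lemma noncrossing_snoc_iff:
  "noncrossing (w @ [p]) \<longleftrightarrow> noncrossing w \<and> (\<forall>i. i \<noteq> p \<longrightarrow> \<not> subseq [i, p, i] w)"
  unfolding noncrossing_def subseq_abab_snoc_iff by blast

lemma subseq_iff_nth:
  "subseq xs ys \<longleftrightarrow>
     (\<exists>ks. sorted_wrt (<) ks \<and> (\<forall>k\<in>set ks. k < length ys) \<and> xs = map ((!) ys) ks)"
proof
  assume "subseq xs ys"
  then show "\<exists>ks. sorted_wrt (<) ks \<and> (\<forall>k\<in>set ks. k < length ys) \<and> xs = map ((!) ys) ks"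
  proof (induction rule: list_emb.induct)
    case (list_emb_Nil ys)
    show ?case by (intro exI[of _ "[]"]) simp
  next
    case (list_emb_Cons xs ys y)
    then obtain ks where "sorted_wrt (<) ks" "\<forall>k\<in>set ks. k < length ys" "xs = map ((!) ys) ks"
      by blast
    then show ?case
      by (intro exI[of _ "map Suc ks"]) (auto simp: sorted_wrt_map)
  next
    case (list_emb_Cons2 x y xs ys)
    then obtain ks where "sorted_wrt (<) ks" "\<forall>k\<in>set ks. k < length ys" "xs = map ((!) ys) ks"
      by blast
    then show ?case
      using list_emb_Cons2.hyps by (intro exI[of _ "0 # map Suc ks"]) (auto simp: sorted_wrt_map)
  qed
next
  assume "\<exists>ks. sorted_wrt (<) ks \<and> (\<forall>k\<in>set ks. k < length ys) \<and> xs = map ((!) ys) ks"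
  then obtain ks where "sorted_wrt (<) ks" "\<forall>k\<in>set ks. k < length ys" "xs = map ((!) ys) ks"
    by blast
  then have "subseq ks [0..<length ys]"
    by (intro sorted_subset_imp_subseq) auto
  then have "subseq (map ((!) ys) ks) (map ((!) ys) [0..<length ys])"
    by (rule subseq_map)
  then show "subseq xs ys"
    using \<open>xs = map ((!) ys) ks\<close> by (simp add: map_nth)
qed

lemma subseq_length4_iff_nth:
  "subseq [a, b, c, d] w \<longleftrightarrow>
     (\<exists>i0 i1 i2 i3. i0 < i1 \<and> i1 < i2 \<and> i2 < i3 \<and> i3 < length w \<and>
        w ! i0 = a \<and> w ! i1 = b \<and> w ! i2 = c \<and> w ! i3 = d)"
proof
  assume "subseq [a, b, c, d] w"
  then obtain ks where "sorted_wrt (<) ks" "\<forall>k\<in>set ks. k < length w" "[a, b, c, d] = map ((!) w) ks"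
    unfolding subseq_iff_nth by metis
  moreover from \<open>[a, b, c, d] = map ((!) w) ks\<close> obtain i0 i1 i2 i3 where "ks = [i0, i1, i2, i3]"
    by (auto simp: Cons_eq_map_conv)
  ultimately show "\<exists>i0 i1 i2 i3. i0 < i1 \<and> i1 < i2 \<and> i2 < i3 \<and> i3 < length w \<and>
        w ! i0 = a \<and> w ! i1 = b \<and> w ! i2 = c \<and> w ! i3 = d"
    by (intro exI[of _ i0] exI[of _ i1] exI[of _ i2] exI[of _ i3]) simp
next
  assume "\<exists>i0 i1 i2 i3. i0 < i1 \<and> i1 < i2 \<and> i2 < i3 \<and> i3 < length w \<and>
        w ! i0 = a \<and> w ! i1 = b \<and> w ! i2 = c \<and> w ! i3 = d"
  then obtain i0 i1 i2 i3 where "i0 < i1" "i1 < i2" "i2 < i3" "i3 < length w"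
    "w ! i0 = a" "w ! i1 = b" "w ! i2 = c" "w ! i3 = d"
    by blast
  then show "subseq [a, b, c, d] w"
    unfolding subseq_iff_nth by (intro exI[of _ "[i0, i1, i2, i3]"]) auto
qed

lemma LNC_iff:
  "w \<in> LNC t x \<longleftrightarrow>
     set w \<subseteq> {1..t} \<and> length w = (\<Sum>i=1..t. x i) \<and>
     (\<forall>i\<in>{1..t}. count_list w i = x i) \<and> noncrossing w"
  unfolding LNC_def noncrossing_def subseq_length4_iff_nth by blast

lemma count_list_rotate [simp]: "count_list (rotate k w) x = count_list w x"
  by (metis rotate_drop_take count_list_append append_take_drop_id add.commute)

lemma LNC_rotate: "w \<in> LNC t x \<Longrightarrow> rotate k w \<in> LNC t x"
  by (simp add: LNC_iff noncrossing_rotate)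

lemma rot_class_rotate: "rot_class (rotate k w) = rot_class w"
proof -
  have "rotate j w = rotate (j + (length w - 1) * k) (rotate k w)" for j
  proof (cases "w = []")
    case False
    then have "j + (length w - 1) * k + k = j + k * length w"
      by (cases "length w") (simp_all add: algebra_simps)
    then show ?thesis
      by (metis rotate_rotate rotate_conv_mod mod_mult_self1)
  qed simp
  then show ?thesis
    unfolding rot_class_def rotate_rotate by blast
qed

lemma rot_class_eq_iff: "rot_class v = rot_class w \<longleftrightarrow> (\<exists>k. v = rotate k w)"
proof
  assume "rot_class v = rot_class w"
  moreover have "v \<in> rot_class v"
    unfolding rot_class_def by (metis (mono_tags) mem_Collect_eq rotate0 id_apply)
  ultimately show "\<exists>k. v = rotate k w"
    unfolding rot_class_def by blast
qed (auto simp: rot_class_rotate)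

lemma rot_class_mem_image_iff:
  assumes "\<And>v k. v \<in> A \<Longrightarrow> rotate k v \<in> A"
  shows "rot_class w \<in> rot_class ` A \<longleftrightarrow> w \<in> A"
  using assms by (auto simp: rot_class_eq_iff)

lemma rotate_past_split: "rotate (Suc (length u)) (u @ p # t) = t @ u @ [p]"
  using rotate_append[of "u @ [p]" t] by simp

lemma valid_word_cut:
  assumes "noncrossing w" and w: "w = u @ p # t" and "p \<in> {1..m}"
    and "length w = (\<Sum>i=1..m. l i) + m - 1" and "set w \<subseteq> {1..m}"
    and "\<forall>i\<in>{1..m}. count_list w i = (if i = p then l i else l i + 1)"
  shows "valid_word m p l (t @ u)"
proof -
  have "noncrossing ((t @ u) @ [p])"
    using \<open>noncrossing w\<close> noncrossing_rotate rotate_past_split unfolding w by (metis append_assoc)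
  then have nc: "noncrossing (t @ u)" and no_ipi: "\<forall>i. i \<noteq> p \<longrightarrow> \<not> subseq [i, p, i] (t @ u)"
    unfolding noncrossing_snoc_iff by blast+
  have count: "count_list w i = count_list (t @ u) i + (if i = p then 1 else 0)" for i
    unfolding w by simp
  then have "count_list (t @ u) p = l p - 1"
    using assms(3,6) by (metis add_diff_cancel_right')
  moreover have "length w = length (t @ u) + 1" "set (t @ u) \<subseteq> set w"
    unfolding w by auto
  ultimately show ?thesis
    using assms(4-6) count nc no_ipi unfolding valid_word_def noncrossing_def by auto
qed

theorem mainTheorem1:
  fixes m p :: nat and l :: "nat \<Rightarrow> nat" and w :: "nat list"
  assumes "m \<ge> 1"
    and "\<forall>i\<in>{1..m}. l i > 0"
    and "p \<in> {1..m}"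
    and "length w = (\<Sum>i=1..m. l i) + m - 1"
    and "set w \<subseteq> {1..m}"
    and "\<forall>i\<in>{1..m}. count_list w i = (if i = p then l i else l i + 1)"
  shows "rot_class w \<in> LNCN m (\<lambda>i. if i = p then l i else l i + 1) \<longleftrightarrow>
         (\<exists>\<omega>. valid_word m p l \<omega> \<and> rot_class w = rot_class (\<omega> @ [p]))"
proof -
  let ?x = "\<lambda>i. if i = p then l i else l i + 1"
  have "(\<Sum>i=1..m. ?x i) = length w"
    using assms(5,6) sum_count_set[of w "{1..m}"] by simp
  then have "w \<in> LNC m ?x \<longleftrightarrow> noncrossing w"
    using assms(5,6) unfolding LNC_iff by simp
  then have "rot_class w \<in> LNCN m ?x \<longleftrightarrow> noncrossing w"
    unfolding LNCN_def using rot_class_mem_image_iff[of "LNC m ?x"] LNC_rotate by blast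
  also have "\<dots> \<longleftrightarrow> (\<exists>\<omega>. valid_word m p l \<omega> \<and> rot_class w = rot_class (\<omega> @ [p]))"
  proof
    assume "noncrossing w"
    have "p \<in> set w"
      using assms(2,3,6) count_notin by fastforce
    then obtain u t where w: "w = u @ p # t"
      by (meson split_list)
    then have "rot_class w = rot_class ((t @ u) @ [p])"
      by (metis rotate_past_split rot_class_rotate append_assoc)
    with valid_word_cut[OF \<open>noncrossing w\<close> w assms(3-6)]
    show "\<exists>\<omega>. valid_word m p l \<omega> \<and> rot_class w = rot_class (\<omega> @ [p])"
      by blast
  next
    assume "\<exists>\<omega>. valid_word m p l \<omega> \<and> rot_class w = rot_class (\<omega> @ [p])"
    then obtain \<omega> k where "valid_word m p l \<omega>" and w: "w = rotate k (\<omega> @ [p])"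
      unfolding rot_class_eq_iff by blast
    then have "noncrossing \<omega> \<and> (\<forall>i. i \<noteq> p \<longrightarrow> \<not> subseq [i, p, i] \<omega>)"
      unfolding valid_word_def noncrossing_def by (elim conjE) (intro conjI)
    then have "noncrossing (\<omega> @ [p])"
      unfolding noncrossing_snoc_iff .
    then show "noncrossing w"
      unfolding w by (rule noncrossing_rotate)
  qed
  finally show ?thesis .
qed

end
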